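(* Let $M=G/H$ be a compact homogeneous space with $\mathrm{rk}(H)=\mathrm{rk}(G)$ (equivalently $\chi(M)\neq 0$) and faithful infinitesimal isotropy representation, and let $(G/H,g,\rho,\varphi)$ be a homogeneous almost quaternion-Hermitian structure. Then the infinitesimal representation $\rho_*:\mathfrak{h}\to\mathfrak{so}(3)$ does not vanish.
   Context: Here $G,H$ are compact, $\mathfrak{g},\mathfrak{h}$ their Lie algebras, $\mathfrak{m}$ the orthogonal complement of $\mathfrak{h}$ in $\mathfrak{g}$ with respect to an $\mathrm{ad}_{\mathfrak{g}}$-invariant scalar product, whose restriction to $\mathfrak{m}$ defines the homogeneous metric $g$; $\iota:H\to\mathrm{SO}(\mathfrak{m})$ is the isotropy representation. A homogeneous almost quaternion-Hermitian structure on $(G/H,g)$ consists of an orthogonal representation $\rho:H\to\mathrm{SO}(3)$ and an $H$-equivariant Lie algebra morphism $\varphi:\mathfrak{so}(3)\to\mathrm{End}^-(\mathfrak{m})$ extending to an algebra representation of the even real Clifford algebra $\mathrm{Cl}^0_3\cong\mathbb{H}$ on $\mathfrak{m}$; $H$ acts on $\mathfrak{so}(3)$ via $\mathrm{Ad}\circ\rho$ and on $\mathrm{End}^-(\mathfrak{m})$ by conjugation via $\iota$. *)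

theory Defs
  imports "HOL-Analysis.Analysis"
begin

text \<open>Matrix Lie algebras: a Lie algebra is modelled as a linear subspace of real
  square matrices closed under the commutator bracket.\<close>

definition lie_bracket :: "real^'n^'n \<Rightarrow> real^'n^'n \<Rightarrow> real^'n^'n" where
  "lie_bracket X Y = X ** Y - Y ** X"

definition skew_matrices :: "(real^'n^'n) set" where
  "skew_matrices = {X. transpose X = - X}"

abbreviation so3 :: "(real^3^3) set" where
  "so3 \<equiv> skew_matrices"

definition lie_subalgebra :: "(real^'n^'n) set \<Rightarrow> bool" where
  "lie_subalgebra L \<longleftrightarrow> subspace L \<and> (\<forall>X\<in>L. \<forall>Y\<in>L. lie_bracket X Y \<in> L)"

definition compact_lie_algebra :: "(real^'n^'n) set \<Rightarrow> bool" where
  "compact_lie_algebra L \<longleftrightarrow> lie_subalgebra L \<and> L \<subseteq> skew_matrices"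

text \<open>Rank of a compact Lie algebra = dimension of a maximal torus
  = maximal dimension of an abelian subalgebra.\<close>
definition lie_rank :: "(real^'n^'n) set \<Rightarrow> nat" where
  "lie_rank L = Max {dim A | A. subspace A \<and> A \<subseteq> L \<and>
                       (\<forall>X\<in>A. \<forall>Y\<in>A. lie_bracket X Y = 0)}"

definition ad_invariant_scalar_product ::
  "(real^'n^'n) set \<Rightarrow> (real^'n^'n \<Rightarrow> real^'n^'n \<Rightarrow> real) \<Rightarrow> bool" where
  "ad_invariant_scalar_product L B \<longleftrightarrow>
     (\<forall>X\<in>L. \<forall>Y\<in>L. B X Y = B Y X) \<and>
     (\<forall>X\<in>L. \<forall>Y\<in>L. \<forall>Z\<in>L. \<forall>a b. B (a *\<^sub>R X + b *\<^sub>R Y) Z = a * B X Z + b * B Y Z) \<and>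
     (\<forall>X\<in>L. X \<noteq> 0 \<longrightarrow> B X X > 0) \<and>
     (\<forall>X\<in>L. \<forall>Y\<in>L. \<forall>Z\<in>L. B (lie_bracket Z X) Y + B X (lie_bracket Z Y) = 0)"

definition orth_compl ::
  "(real^'n^'n) set \<Rightarrow> (real^'n^'n) set \<Rightarrow> (real^'n^'n \<Rightarrow> real^'n^'n \<Rightarrow> real) \<Rightarrow> (real^'n^'n) set" where
  "orth_compl g h B = {X\<in>g. \<forall>Y\<in>h. B X Y = 0}"

text \<open>Endomorphisms of m (only their values on m matter).\<close>
definition endo_on :: "'a::real_vector set \<Rightarrow> ('a \<Rightarrow> 'a) \<Rightarrow> bool" where
  "endo_on V A \<longleftrightarrow> (\<forall>x\<in>V. A x \<in> V) \<and>
     (\<forall>x\<in>V. \<forall>y\<in>V. \<forall>a b. A (a *\<^sub>R x + b *\<^sub>R y) = a *\<^sub>R A x + b *\<^sub>R A y)"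

definition skew_endo_on ::
  "'a::real_vector set \<Rightarrow> ('a \<Rightarrow> 'a \<Rightarrow> real) \<Rightarrow> ('a \<Rightarrow> 'a) \<Rightarrow> bool" where
  "skew_endo_on V B A \<longleftrightarrow> endo_on V A \<and> (\<forall>x\<in>V. \<forall>y\<in>V. B (A x) y = - B x (A y))"

definition faithful_isotropy ::
  "(real^'n^'n) set \<Rightarrow> (real^'n^'n) set \<Rightarrow> bool" where
  "faithful_isotropy h m \<longleftrightarrow> (\<forall>Y\<in>h. (\<forall>X\<in>m. lie_bracket Y X = 0) \<longrightarrow> Y = 0)"

definition lie_hom_into_so3 :: "(real^'n^'n) set \<Rightarrow> (real^'n^'n \<Rightarrow> real^3^3) \<Rightarrow> bool" where
  "lie_hom_into_so3 h r \<longleftrightarrow>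
     (\<forall>Y\<in>h. r Y \<in> so3) \<and>
     (\<forall>X\<in>h. \<forall>Y\<in>h. \<forall>a b. r (a *\<^sub>R X + b *\<^sub>R Y) = a *\<^sub>R r X + b *\<^sub>R r Y) \<and>
     (\<forall>X\<in>h. \<forall>Y\<in>h. r (lie_bracket X Y) = lie_bracket (r X) (r Y))"

text \<open>Axial vector of a skew 3x3 matrix X, i.e. X w = axial X \<times> w; this is the
  standard identification so(3) = R^3 with the cross product.\<close>
definition axial :: "real^3^3 \<Rightarrow> real^3" where
  "axial X = vector [X $ 3 $ 2, X $ 1 $ 3, X $ 2 $ 1]"

definition lie_hom_so3_skew_endo ::
  "'a::real_vector set \<Rightarrow> ('a \<Rightarrow> 'a \<Rightarrow> real) \<Rightarrow> (real^3^3 \<Rightarrow> 'a \<Rightarrow> 'a) \<Rightarrow> bool" where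
  "lie_hom_so3_skew_endo V B p \<longleftrightarrow>
     (\<forall>X\<in>so3. skew_endo_on V B (p X)) \<and>
     (\<forall>X\<in>so3. \<forall>Y\<in>so3. \<forall>a b. \<forall>x\<in>V. p (a *\<^sub>R X + b *\<^sub>R Y) x = a *\<^sub>R p X x + b *\<^sub>R p Y x) \<and>
     (\<forall>X\<in>so3. \<forall>Y\<in>so3. \<forall>x\<in>V. p (lie_bracket X Y) x = p X (p Y x) - p Y (p X x))"

text \<open>phi extends to an algebra representation of Cl^0_3 = H (quaternions with
  Hamilton's presentation i^2 = j^2 = k^2 = ijk = -1), where so(3) embeds into Cl^0_3
  as the imaginary quaternions via X \<mapsto> (1/2)(v1 i + v2 j + v3 k), v = axial X
  (i.e. e_a \<wedge> e_b \<mapsto> (1/2) e_a e_b).  An algebra representation of H on V is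
  given by the images I, J, K of i, j, k (with 1 \<mapsto> id).\<close>
definition extends_to_Cl03_rep ::
  "'a::real_vector set \<Rightarrow> (real^3^3 \<Rightarrow> 'a \<Rightarrow> 'a) \<Rightarrow> bool" where
  "extends_to_Cl03_rep V p \<longleftrightarrow>
     (\<exists>I J K. endo_on V I \<and> endo_on V J \<and> endo_on V K \<and>
        (\<forall>x\<in>V. I (I x) = - x \<and> J (J x) = - x \<and> K (K x) = - x \<and> I (J (K x)) = - x) \<and>
        (\<forall>X\<in>so3. \<forall>x\<in>V. p X x =
            (1/2) *\<^sub>R ((axial X $ 1) *\<^sub>R I x + (axial X $ 2) *\<^sub>R J x + (axial X $ 3) *\<^sub>R K x)))"

text \<open>H-equivariance of phi, infinitesimally: for Y in h, the derivative of the
  H-action Ad o rho on so(3) is ad(rho_* Y); the derivative of conjugation via the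
  isotropy representation on End(m) is the commutator with ad(Y)|_m.\<close>
definition equivariant_inf ::
  "(real^'n^'n) set \<Rightarrow> (real^'n^'n) set \<Rightarrow> (real^'n^'n \<Rightarrow> real^3^3)
     \<Rightarrow> (real^3^3 \<Rightarrow> real^'n^'n \<Rightarrow> real^'n^'n) \<Rightarrow> bool" where
  "equivariant_inf h m r p \<longleftrightarrow>
     (\<forall>Y\<in>h. \<forall>X\<in>so3. \<forall>x\<in>m.
        p (lie_bracket (r Y) X) x = lie_bracket Y (p X x) - p X (lie_bracket Y x))"

end

theory Submission
  imports Defs
begin

text \<open>Suppose \<open>\<rho>\<^sub>* = 0\<close>. Then the endomorphisms \<open>I, J, K\<close> of \<open>m\<close> commute with \<open>ad h\<close>, in
  particular with \<open>ad t\<close> for an abelian subalgebra \<open>t \<subseteq> h\<close> of maximal dimension; the rank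
  condition makes \<open>t\<close> maximal abelian in \<open>g\<close> as well, i.e. its own centralizer in \<open>g\<close>.
  A minimal subspace of \<open>m\<close> stable under \<open>I\<close> and \<open>ad t\<close> contains a common weight vector
  \<open>x \<noteq> 0\<close> with \<open>[Y, x] = \<alpha>(Y) I x\<close> for \<open>Y \<in> t\<close>. Then \<open>h0 = [x, I x]\<close> centralizes \<open>t\<close>, hence
  lies in \<open>t\<close>, and \<open>B(h0, Y) = \<alpha>(Y) B(x, x)\<close> forces \<open>\<alpha>(h0) > 0\<close>. The brackets
  \<open>[x, J x] - [I x, K x]\<close> and \<open>[x, K x] + [I x, J x]\<close> centralize \<open>t\<close> and are orthogonal to it,
  so they vanish, and the Jacobi identity turns this into
  \<open>B(P, P) + B(Q, Q) = -\<alpha>(h0) B(x, x) < 0\<close> for \<open>P = [x, J x]\<close>, \<open>Q = [I x, J x]\<close>.\<close>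

section \<open>Matrix Lie brackets\<close>

lemma bilinear_matrix_mult: "bilinear ((**) :: real^'n^'m \<Rightarrow> real^'p^'n \<Rightarrow> real^'p^'m)"
  unfolding bilinear_def
  by (auto intro!: linearI simp: matrix_add_ldistrib matrix_scalar_ac scalar_matrix_assoc[symmetric])
     (vector matrix_matrix_mult_def sum.distrib[symmetric] field_simps)

lemma bilinear_lie_bracket: "bilinear (lie_bracket :: real^'n^'n \<Rightarrow> _)"
  unfolding bilinear_def lie_bracket_def
  by (auto intro!: linearI simp: bilinear_ladd bilinear_radd bilinear_lmul bilinear_rmul
      bilinear_matrix_mult algebra_simps)

lemmas lie_bracket_add_left = bilinear_ladd[OF bilinear_lie_bracket]
  and lie_bracket_add_right = bilinear_radd[OF bilinear_lie_bracket]
  and lie_bracket_scale_left = bilinear_lmul[OF bilinear_lie_bracket]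
  and lie_bracket_scale_right = bilinear_rmul[OF bilinear_lie_bracket]
  and lie_bracket_minus_left = bilinear_lneg[OF bilinear_lie_bracket]
  and lie_bracket_minus_right = bilinear_rneg[OF bilinear_lie_bracket]
  and lie_bracket_diff_right = bilinear_rsub[OF bilinear_lie_bracket]
  and lie_bracket_zero_left [simp] = bilinear_lzero[OF bilinear_lie_bracket]
  and lie_bracket_zero_right [simp] = bilinear_rzero[OF bilinear_lie_bracket]

lemma lie_bracket_antisym: "lie_bracket X Y = - lie_bracket Y X"
  by (simp add: lie_bracket_def)

lemma lie_bracket_self [simp]: "lie_bracket X X = 0"
  by (simp add: lie_bracket_def)

lemma lie_bracket_jacobi:
  "lie_bracket Z (lie_bracket X Y) = lie_bracket (lie_bracket Z X) Y + lie_bracket X (lie_bracket Z Y)"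
  by (simp add: lie_bracket_def bilinear_lsub bilinear_rsub bilinear_matrix_mult matrix_mul_assoc)

lemma inner_matrix_trace: "(X::real^'n^'n) \<bullet> Y = trace (transpose X ** Y)"
proof -
  have "trace (transpose X ** Y) = (\<Sum>j\<in>UNIV. \<Sum>i\<in>UNIV. X$i$j * Y$i$j)"
    by (simp add: trace_def transpose_def matrix_matrix_mult_def)
  also have "\<dots> = (\<Sum>i\<in>UNIV. \<Sum>j\<in>UNIV. X$i$j * Y$i$j)"
    by (rule sum.swap)
  finally show ?thesis by (simp add: inner_vec_def)
qed

lemma inner_lie_bracket_skew:
  fixes X Y Z :: "real^'n^'n"
  assumes "transpose Y = - Y"
  shows "lie_bracket Y X \<bullet> Z = - (X \<bullet> lie_bracket Y Z)"
proof -
  have trace_neg: "trace (- A) = - trace A" for A :: "real^'n^'n"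
    by (simp add: trace_def sum_negf)
  have "(Y ** X) \<bullet> Z = - (X \<bullet> (Y ** Z))"
    unfolding inner_matrix_trace
    by (simp add: matrix_transpose_mul assms matrix_mul_assoc[symmetric] bilinear_lneg
        bilinear_rneg bilinear_matrix_mult trace_neg)
  moreover have "(X ** Y) \<bullet> Z = - (X \<bullet> (Z ** Y))"
    unfolding inner_matrix_trace
    using trace_mul_sym[of "transpose Y" "transpose X ** Z"]
    by (simp add: matrix_transpose_mul assms matrix_mul_assoc bilinear_lneg bilinear_rneg
        bilinear_matrix_mult trace_neg)
  ultimately show ?thesis
    unfolding lie_bracket_def inner_diff_left inner_diff_right by simp
qed

section \<open>Eigenvectors of symmetric operators\<close>

lemma linear_coeff_zero_if_quadratic_nonpos:
  fixes b c :: real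
  assumes "\<And>s. 2 * s * b + s\<^sup>2 * c \<le> 0"
  shows "b = 0"
proof (cases "c < 0")
  case True
  have "2 * (b / - c) * b + (b / - c)\<^sup>2 * c = b\<^sup>2 / - c"
    using True by (simp add: field_simps power2_eq_square)
  then have "b\<^sup>2 / - c \<le> 0" using assms[of "b / - c"] by simp
  then show ?thesis using True by (auto simp: zero_le_divide_iff)
next
  case False
  then have "b\<^sup>2 * c \<ge> 0" by simp
  then have "b\<^sup>2 \<le> 0" using assms[of b] by (simp add: power2_eq_square)
  then show ?thesis by simp
qed

lemma rayleigh_quotient_maximum:
  fixes A :: "'a::euclidean_space \<Rightarrow> 'a"
  assumes "linear A" "subspace V" "V \<noteq> {0}"
  obtains v where "v \<in> V" "norm v = 1" "\<And>u. u \<in> V \<Longrightarrow> u \<bullet> A u \<le> (v \<bullet> A v) * (u \<bullet> u)"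
proof -
  let ?S = "V \<inter> sphere 0 1"
  have "compact ?S"
    using closed_subspace[OF assms(2)] by (simp add: closed_Int_compact)
  obtain x where "x \<in> V" "x \<noteq> 0" using assms(2,3) subspace_0 by blast
  then have "x /\<^sub>R norm x \<in> ?S" using assms(2) by (simp add: subspace_scale)
  moreover have "continuous_on ?S (\<lambda>u. u \<bullet> A u)"
    using assms(1) by (intro continuous_intros linear_continuous_on linear_conv_bounded_linear[THEN iffD1])
  ultimately obtain v where v: "v \<in> ?S" and max: "\<And>u. u \<in> ?S \<Longrightarrow> u \<bullet> A u \<le> v \<bullet> A v"
    using continuous_attains_sup[OF \<open>compact ?S\<close>] by blast
  have "u \<bullet> A u \<le> (v \<bullet> A v) * (u \<bullet> u)" if "u \<in> V" for u
  proof (cases "u = 0")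
    case True
    then show ?thesis using assms(1) by (simp add: linear_0)
  next
    case False
    have "u /\<^sub>R norm u \<in> ?S" using that False assms(2) by (simp add: subspace_scale)
    then have "(u /\<^sub>R norm u) \<bullet> A (u /\<^sub>R norm u) \<le> v \<bullet> A v" by (rule max)
    moreover have "(u /\<^sub>R norm u) \<bullet> A (u /\<^sub>R norm u) = (u \<bullet> A u) / (u \<bullet> u)"
      using assms(1) False
      by (simp add: linear_scale power2_norm_eq_inner[symmetric] power2_eq_square field_simps)
    ultimately show ?thesis using False by (simp add: divide_le_eq)
  qed
  then show ?thesis using that v by auto
qed

lemma symmetric_operator_has_eigenvector:
  fixes A :: "'a::euclidean_space \<Rightarrow> 'a"
  assumes A: "linear A" and sym: "\<And>u w. A u \<bullet> w = u \<bullet> A w"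
    and V: "subspace V" "V \<noteq> {0}" and inv: "\<And>u. u \<in> V \<Longrightarrow> A u \<in> V"
  shows "\<exists>v\<in>V. v \<noteq> 0 \<and> (\<exists>l. A v = l *\<^sub>R v)"
proof -
  obtain v where v: "v \<in> V" "norm v = 1" and max: "\<And>u. u \<in> V \<Longrightarrow> u \<bullet> A u \<le> (v \<bullet> A v) * (u \<bullet> u)"
    using rayleigh_quotient_maximum[OF A V] by blast
  define l where "l = v \<bullet> A v"
  define w where "w = A v - l *\<^sub>R v"
  have "w \<in> V" unfolding w_def using v inv V(1) by (simp add: subspace_diff subspace_scale)
  have "v \<bullet> v = 1" using v(2) by (simp add: norm_eq_1)
  have "v \<bullet> A w = w \<bullet> A v" using sym[of w v] by (simp add: inner_commute)
  have wAv: "w \<bullet> A v - l * (v \<bullet> w) = w \<bullet> w"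
    by (simp add: w_def inner_diff_left inner_diff_right inner_commute algebra_simps)
  \<comment> \<open>maximality of the Rayleigh quotient at \<open>v\<close>, tested along \<open>v + s w\<close>\<close>
  have "2 * s * (w \<bullet> w) + s\<^sup>2 * (w \<bullet> A w - l * (w \<bullet> w)) \<le> 0" for s
  proof -
    have "v + s *\<^sub>R w \<in> V" using v \<open>w \<in> V\<close> V(1) by (simp add: subspace_add subspace_scale)
    then have le: "(v + s *\<^sub>R w) \<bullet> A (v + s *\<^sub>R w) \<le> l * ((v + s *\<^sub>R w) \<bullet> (v + s *\<^sub>R w))"
      using max by (simp add: l_def)
    have "(v + s *\<^sub>R w) \<bullet> A (v + s *\<^sub>R w) = l + 2 * s * (w \<bullet> A v) + s\<^sup>2 * (w \<bullet> A w)"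
      using \<open>v \<bullet> A w = w \<bullet> A v\<close>
      by (simp add: l_def linear_add[OF A] linear_scale[OF A] inner_add_left inner_add_right
          power2_eq_square algebra_simps)
    moreover have "(v + s *\<^sub>R w) \<bullet> (v + s *\<^sub>R w) = 1 + 2 * s * (v \<bullet> w) + s\<^sup>2 * (w \<bullet> w)"
      using \<open>v \<bullet> v = 1\<close>
      by (simp add: inner_add_left inner_add_right inner_commute[of w v] power2_eq_square algebra_simps)
    ultimately have "2 * s * (w \<bullet> A v - l * (v \<bullet> w)) + s\<^sup>2 * (w \<bullet> A w - l * (w \<bullet> w)) \<le> 0"
      using le by (simp add: algebra_simps)
    then show ?thesis by (simp only: wAv)
  qed
  then have "w \<bullet> w = 0" by (rule linear_coeff_zero_if_quadratic_nonpos)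
  then have "A v = l *\<^sub>R v" by (simp add: w_def)
  moreover have "v \<noteq> 0" using v(2) by auto
  ultimately show ?thesis using v(1) by blast
qed

lemma endo_on_mem: "endo_on V P \<Longrightarrow> x \<in> V \<Longrightarrow> P x \<in> V"
  by (simp add: endo_on_def)

lemma endo_on_add:
  assumes "endo_on V P" "x \<in> V" "y \<in> V"
  shows "P (x + y) = P x + P y"
proof -
  have "P (1 *\<^sub>R x + 1 *\<^sub>R y) = 1 *\<^sub>R P x + 1 *\<^sub>R P y"
    using assms unfolding endo_on_def by blast
  then show ?thesis by simp
qed

lemma endo_on_scale:
  assumes "endo_on V P" "x \<in> V"
  shows "P (c *\<^sub>R x) = c *\<^sub>R P x"
proof -
  have "P (c *\<^sub>R x + 0 *\<^sub>R x) = c *\<^sub>R P x + 0 *\<^sub>R P x"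
    using assms unfolding endo_on_def by blast
  then show ?thesis by simp
qed

lemma endo_on_minus: "endo_on V P \<Longrightarrow> x \<in> V \<Longrightarrow> P (- x) = - P x"
  using endo_on_scale[of V P x "-1"] by simp

lemma quaternion_products:
  assumes endo: "endo_on V I" "endo_on V J" "endo_on V K"
    and rel: "\<forall>x\<in>V. I (I x) = - x \<and> J (J x) = - x \<and> K (K x) = - x \<and> I (J (K x)) = - x"
    and x: "x \<in> V"
  shows "I (J x) = K x" and "J (I x) = - K x" and "K (I x) = J x"
proof -
  note mem = endo_on_mem[OF endo(1)] endo_on_mem[OF endo(2)] endo_on_mem[OF endo(3)]
  note minus = endo_on_minus[OF endo(1)] endo_on_minus[OF endo(2)]
  have IJ: "I (J y) = K y" if "y \<in> V" for y
  proof -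
    have "I (J (K (K y))) = - K y" using rel mem that by blast
    then show ?thesis using rel that mem minus by simp
  qed
  show "I (J x) = K x" by (rule IJ[OF x])
  have JIJ: "J (I (J y)) = I y" if "y \<in> V" for y
  proof -
    have "I (J (I (J y))) = - y" using IJ[OF that] IJ[of "K y"] rel mem that by simp
    then have "I (I (J (I (J y)))) = I (- y)" by simp
    then show ?thesis using rel mem that minus by simp
  qed
  have "- J (I x) = J (I (J (J x)))" using rel x mem minus by simp
  also have "\<dots> = K x" using JIJ[of "J x"] IJ x mem by simp
  finally have "- (- J (I x)) = - K x" by simp
  then show JI: "J (I x) = - K x" by simp
  have "I (I (J x)) = - J x" using rel mem x by blast
  then have IK: "I (K x) = - J x" using IJ[OF x] by simp
  have "K (I x) = I (J (I x))" using IJ mem x by simp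
  also have "\<dots> = J x" using JI IK mem x minus by simp
  finally show "K (I x) = J x" .
qed

definition so3_e1 :: "real^3^3" where
  "so3_e1 = (\<chi> i j. if i = 3 \<and> j = 2 then 1 else if i = 2 \<and> j = 3 then -1 else 0)"
definition so3_e2 :: "real^3^3" where
  "so3_e2 = (\<chi> i j. if i = 1 \<and> j = 3 then 1 else if i = 3 \<and> j = 1 then -1 else 0)"
definition so3_e3 :: "real^3^3" where
  "so3_e3 = (\<chi> i j. if i = 2 \<and> j = 1 then 1 else if i = 1 \<and> j = 2 then -1 else 0)"

lemma so3_units_in_so3: "so3_e1 \<in> so3" "so3_e2 \<in> so3" "so3_e3 \<in> so3"
  unfolding skew_matrices_def so3_e1_def so3_e2_def so3_e3_def
  by (auto simp: vec_eq_iff transpose_def forall_3)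

lemma axial_so3_units:
  "axial so3_e1 = vector [1, 0, 0]" "axial so3_e2 = vector [0, 1, 0]" "axial so3_e3 = vector [0, 0, 1]"
  unfolding axial_def so3_e1_def so3_e2_def so3_e3_def by simp_all

lemma finite_abelian_subspace_dims:
  "finite {dim A | A :: (real^'n^'n) set. subspace A \<and> A \<subseteq> L \<and> (\<forall>X\<in>A. \<forall>Y\<in>A. lie_bracket X Y = 0)}"
proof (rule finite_subset)
  show "{dim A | A :: (real^'n^'n) set. subspace A \<and> A \<subseteq> L \<and> (\<forall>X\<in>A. \<forall>Y\<in>A. lie_bracket X Y = 0)}
      \<subseteq> {..DIM(real^'n^'n)}"
    using dim_subset_UNIV[where 'a = "real^'n^'n"] by (auto simp del: DIM_cart)
qed simp

lemma dim_abelian_le_lie_rank: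
  assumes "subspace A" "A \<subseteq> L" "\<forall>X\<in>A. \<forall>Y\<in>A. lie_bracket X Y = 0"
  shows "dim A \<le> lie_rank L"
  unfolding lie_rank_def using assms by (intro Max_ge[OF finite_abelian_subspace_dims]) blast

lemma lie_rank_attained:
  fixes L :: "(real^'n^'n) set"
  assumes "0 \<in> L"
  obtains A where "subspace A" "A \<subseteq> L" "\<forall>X\<in>A. \<forall>Y\<in>A. lie_bracket X Y = 0" "dim A = lie_rank L"
proof -
  have "{0} \<subseteq> L" "subspace {0 :: real^'n^'n}" using assms by (auto simp: subspace_def)
  then have "lie_rank L \<in> {dim A | A. subspace A \<and> A \<subseteq> L \<and> (\<forall>X\<in>A. \<forall>Y\<in>A. lie_bracket X Y = 0)}"
    unfolding lie_rank_def by (intro Max_in[OF finite_abelian_subspace_dims]) auto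
  then show ?thesis using that by force
qed

text \<open>Adjoining a centralizing element to an abelian subalgebra of maximal dimension would
  give a larger abelian subalgebra.\<close>
lemma self_centralizing_if_dim_eq_lie_rank:
  assumes g: "lie_subalgebra g" and t: "subspace t" "t \<subseteq> g" "\<forall>X\<in>t. \<forall>Y\<in>t. lie_bracket X Y = 0"
    and dim: "dim t = lie_rank g"
    and X: "X \<in> g" "\<And>Y. Y \<in> t \<Longrightarrow> lie_bracket Y X = 0"
  shows "X \<in> t"
proof (rule ccontr)
  assume "X \<notin> t"
  define A where "A = span (insert X t)"
  have "lie_bracket U W = 0" if "U \<in> A" "W \<in> A" for U W
  proof -
    have "U \<in> span (insert X t)" "W \<in> span (insert X t)" using that by (simp_all add: A_def)
    then obtain k k' where u: "U - k *\<^sub>R X \<in> t" and w: "W - k' *\<^sub>R X \<in> t"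
      unfolding span_insert using span_eq_iff[THEN iffD2, OF t(1)] by auto
    define u w where "u = U - k *\<^sub>R X" and "w = W - k' *\<^sub>R X"
    have "lie_bracket U W = lie_bracket (k *\<^sub>R X + u) (k' *\<^sub>R X + w)" by (simp add: u_def w_def)
    also have "\<dots> = k *\<^sub>R lie_bracket X w + k' *\<^sub>R lie_bracket u X + lie_bracket u w"
      by (simp add: lie_bracket_add_left lie_bracket_add_right lie_bracket_scale_left
          lie_bracket_scale_right)
    also have "\<dots> = 0"
      using t(3) X(2) u w lie_bracket_antisym[of X w] by (simp add: u_def w_def)
    finally show ?thesis .
  qed
  moreover have "subspace A" "A \<subseteq> g"
    using g X(1) t(2) span_minimal[of "insert X t" g] unfolding A_def lie_subalgebra_def by auto
  ultimately have "dim A \<le> lie_rank g" by (intro dim_abelian_le_lie_rank) auto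
  moreover have "X \<notin> span t"
    by (subst span_eq_iff[THEN iffD2, OF t(1)]) (rule \<open>X \<notin> t\<close>)
  then have "dim A = dim t + 1" unfolding A_def by (simp add: dim_insert)
  ultimately show False using dim by simp
qed

lemma exists_self_centralizing_torus:
  assumes "lie_subalgebra g" "lie_subalgebra h" "h \<subseteq> g" "lie_rank h = lie_rank g"
  obtains t where "subspace t" "t \<subseteq> h" "\<forall>X\<in>t. \<forall>Y\<in>t. lie_bracket X Y = 0"
    and "\<And>X. X \<in> g \<Longrightarrow> (\<And>Y. Y \<in> t \<Longrightarrow> lie_bracket Y X = 0) \<Longrightarrow> X \<in> t"
proof -
  have "0 \<in> h" using assms(2) by (simp add: lie_subalgebra_def subspace_0)
  then obtain t where t: "subspace t" "t \<subseteq> h" "\<forall>X\<in>t. \<forall>Y\<in>t. lie_bracket X Y = 0" "dim t = lie_rank h"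
    using lie_rank_attained by blast
  then show ?thesis
    using that self_centralizing_if_dim_eq_lie_rank[OF assms(1) t(1) _ t(3)] assms(3,4) by auto
qed

section \<open>Invariant scalar products\<close>

locale invariant_scalar_product =
  fixes g :: "(real^'n^'n) set" and B :: "real^'n^'n \<Rightarrow> real^'n^'n \<Rightarrow> real"
  assumes compact: "compact_lie_algebra g"
    and scalar_product: "ad_invariant_scalar_product g B"
begin

lemma subspace_g: "subspace g"
  and bracket_closed: "X \<in> g \<Longrightarrow> Y \<in> g \<Longrightarrow> lie_bracket X Y \<in> g"
  and skew: "X \<in> g \<Longrightarrow> transpose X = - X"
  using compact by (auto simp: compact_lie_algebra_def lie_subalgebra_def skew_matrices_def)

lemma B_sym: "X \<in> g \<Longrightarrow> Y \<in> g \<Longrightarrow> B X Y = B Y X"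
  and B_lin: "X \<in> g \<Longrightarrow> Y \<in> g \<Longrightarrow> Z \<in> g \<Longrightarrow> B (a *\<^sub>R X + b *\<^sub>R Y) Z = a * B X Z + b * B Y Z"
  and B_pos: "X \<in> g \<Longrightarrow> X \<noteq> 0 \<Longrightarrow> B X X > 0"
  and B_bracket: "X \<in> g \<Longrightarrow> Y \<in> g \<Longrightarrow> Z \<in> g \<Longrightarrow> B (lie_bracket Z X) Y = - B X (lie_bracket Z Y)"
  using scalar_product unfolding ad_invariant_scalar_product_def by (auto simp: eq_neg_iff_add_eq_0)

lemma B_add_left: "X \<in> g \<Longrightarrow> Y \<in> g \<Longrightarrow> Z \<in> g \<Longrightarrow> B (X + Y) Z = B X Z + B Y Z"
  using B_lin[of X Y Z 1 1] by simp

lemma B_scale_left: "X \<in> g \<Longrightarrow> Z \<in> g \<Longrightarrow> B (c *\<^sub>R X) Z = c * B X Z"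
  using B_lin[of X X Z c 0] by simp

lemma scaleR_in_g: "X \<in> g \<Longrightarrow> c *\<^sub>R X \<in> g"
  using subspace_g by (simp add: subspace_scale)

lemma B_scale_right: "X \<in> g \<Longrightarrow> Z \<in> g \<Longrightarrow> B Z (c *\<^sub>R X) = c * B Z X"
proof -
  assume "X \<in> g" "Z \<in> g"
  moreover have "c *\<^sub>R X \<in> g" using \<open>X \<in> g\<close> by (rule scaleR_in_g)
  ultimately have "B Z (c *\<^sub>R X) = B (c *\<^sub>R X) Z" using \<open>Z \<in> g\<close> B_sym by blast
  also have "\<dots> = c * B Z X" using \<open>X \<in> g\<close> \<open>Z \<in> g\<close> B_scale_left B_sym by simp
  finally show ?thesis .
qed

lemma B_minus_right: "X \<in> g \<Longrightarrow> Z \<in> g \<Longrightarrow> B Z (- X) = - B Z X"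
  using B_scale_right[of X Z "-1"] by simp

lemma B_add_right: "X \<in> g \<Longrightarrow> Y \<in> g \<Longrightarrow> Z \<in> g \<Longrightarrow> B Z (X + Y) = B Z X + B Z Y"
  using B_add_left B_sym subspace_g by (simp add: subspace_add)

lemma B_diff_left: "X \<in> g \<Longrightarrow> Y \<in> g \<Longrightarrow> Z \<in> g \<Longrightarrow> B (X - Y) Z = B X Z - B Y Z"
  using B_lin[of X Y Z 1 "-1"] by simp

lemma B_bracket_swap:
  assumes "X \<in> g" "Y \<in> g" "Z \<in> g"
  shows "B (lie_bracket Z X) Y = B X (lie_bracket Y Z)"
  using B_bracket[OF assms] B_minus_right[OF bracket_closed[OF assms(3,2)] assms(1)]
  by (simp add: lie_bracket_antisym[of Z Y])

lemma B_zero_left: "Z \<in> g \<Longrightarrow> B 0 Z = 0"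
  using B_scale_left[of Z Z 0] by simp

lemma B_nonneg: "X \<in> g \<Longrightarrow> B X X \<ge> 0"
  using B_pos[of X] B_zero_left[of 0] by (cases "X = 0") auto

lemma subspace_orth_compl:
  assumes "h \<subseteq> g"
  shows "subspace (orth_compl g h B)"
  unfolding subspace_def orth_compl_def
  using assms subspace_g B_zero_left B_add_left B_scale_left
  by (auto simp: subspace_0 subspace_add subspace_scale subset_iff)

lemma orth_compl_bracket_closed:
  assumes "lie_subalgebra h" "h \<subseteq> g" "Y \<in> h" "X \<in> orth_compl g h B"
  shows "lie_bracket Y X \<in> orth_compl g h B"
proof -
  have "X \<in> g" "Y \<in> g" using assms by (auto simp: orth_compl_def)
  moreover have "B X (lie_bracket Y Z) = 0" if "Z \<in> h" for Z
    using assms that by (auto simp: orth_compl_def lie_subalgebra_def)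
  ultimately show ?thesis
    using assms B_bracket bracket_closed unfolding orth_compl_def by (auto simp: subset_iff)
qed

lemma skew_endo_on_rescale:
  assumes "V \<subseteq> g" "endo_on V Q" "skew_endo_on V B P" "\<And>x. x \<in> V \<Longrightarrow> P x = c *\<^sub>R Q x" "c \<noteq> 0"
  shows "skew_endo_on V B Q"
proof -
  have "B (Q x) y = - B x (Q y)" if "x \<in> V" "y \<in> V" for x y
  proof -
    have mem: "x \<in> g" "y \<in> g" "Q x \<in> g" "Q y \<in> g"
      using assms(1,2) that by (auto simp: endo_on_def)
    have "c * B (Q x) y = B (P x) y" using assms(4) that mem B_scale_left by simp
    also have "\<dots> = - B x (P y)" using assms(3) that by (simp add: skew_endo_on_def)
    also have "\<dots> = - (c * B x (Q y))" using assms(4) that mem B_scale_right by simp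
    finally have "c * (B (Q x) y + B x (Q y)) = 0" by (simp add: algebra_simps)
    then show ?thesis using assms(5) by simp
  qed
  then show ?thesis using assms(2) by (simp add: skew_endo_on_def)
qed

text \<open>This is where \<open>\<rho>\<^sub>* = 0\<close> enters: equivariance of \<open>phi\<close> then says that each \<open>phi E\<close>
  commutes with \<open>ad h\<close>.\<close>
lemma quaternion_unit_of_phi:
  assumes m: "m \<subseteq> g" "\<And>Y x. Y \<in> h \<Longrightarrow> x \<in> m \<Longrightarrow> lie_bracket Y x \<in> m"
    and phi: "lie_hom_so3_skew_endo m B phi" "equivariant_inf h m rho phi"
    and rho: "\<And>Y. Y \<in> h \<Longrightarrow> rho Y = 0"
    and E: "E \<in> so3" and Q: "endo_on m Q" "\<And>x. x \<in> m \<Longrightarrow> phi E x = (1/2) *\<^sub>R Q x"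
  shows "skew_endo_on m B Q"
    and "\<And>Y x. Y \<in> h \<Longrightarrow> x \<in> m \<Longrightarrow> lie_bracket Y (Q x) = Q (lie_bracket Y x)"
proof -
  show "skew_endo_on m B Q"
    using phi(1) E
    by (intro skew_endo_on_rescale[OF m(1) Q(1) _ Q(2)]) (auto simp: lie_hom_so3_skew_endo_def)
  fix Y x assume Y: "Y \<in> h" and x: "x \<in> m"
  have "phi (0 *\<^sub>R E + 0 *\<^sub>R E) x = 0 *\<^sub>R phi E x + 0 *\<^sub>R phi E x"
    using phi(1) E x unfolding lie_hom_so3_skew_endo_def by blast
  then have "phi 0 x = 0" by simp
  moreover have "phi (lie_bracket (rho Y) E) x = lie_bracket Y (phi E x) - phi E (lie_bracket Y x)"
    using phi(2) Y E x by (simp add: equivariant_inf_def)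
  ultimately have "lie_bracket Y (phi E x) = phi E (lie_bracket Y x)"
    using rho[OF Y] by simp
  then have "(1/2) *\<^sub>R lie_bracket Y (Q x) = (1/2) *\<^sub>R Q (lie_bracket Y x)"
    using Q(2) x m(2)[OF Y x] by (simp add: lie_bracket_scale_right)
  then show "lie_bracket Y (Q x) = Q (lie_bracket Y x)" by simp
qed

lemma quaternionic_structure_of_phi:
  assumes h: "lie_subalgebra h" "h \<subseteq> g" and m: "m = orth_compl g h B"
    and phi: "lie_hom_so3_skew_endo m B phi" "equivariant_inf h m rho phi" "extends_to_Cl03_rep m phi"
    and rho: "\<And>Y. Y \<in> h \<Longrightarrow> rho Y = 0"
  obtains I J K where "\<forall>x\<in>m. I (I x) = - x \<and> J (J x) = - x \<and> K (K x) = - x \<and> I (J (K x)) = - x"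
    and "skew_endo_on m B I" "skew_endo_on m B J" "skew_endo_on m B K"
    and "\<forall>Y\<in>h. \<forall>x\<in>m. lie_bracket Y (I x) = I (lie_bracket Y x)"
    and "\<forall>Y\<in>h. \<forall>x\<in>m. lie_bracket Y (J x) = J (lie_bracket Y x)"
    and "\<forall>Y\<in>h. \<forall>x\<in>m. lie_bracket Y (K x) = K (lie_bracket Y x)"
proof -
  have m_g: "m \<subseteq> g" "\<And>Y x. Y \<in> h \<Longrightarrow> x \<in> m \<Longrightarrow> lie_bracket Y x \<in> m"
    using orth_compl_bracket_closed[OF h] by (auto simp: m orth_compl_def)
  have unit: "skew_endo_on m B Q \<and> (\<forall>Y\<in>h. \<forall>x\<in>m. lie_bracket Y (Q x) = Q (lie_bracket Y x))"
    if "E \<in> so3" "endo_on m Q" "\<And>x. x \<in> m \<Longrightarrow> phi E x = (1/2) *\<^sub>R Q x" for E Q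
    using quaternion_unit_of_phi[of m h phi rho E Q] m_g phi(1,2) rho that by blast
  obtain I J K where IJK: "endo_on m I" "endo_on m J" "endo_on m K"
    and "\<forall>x\<in>m. I (I x) = - x \<and> J (J x) = - x \<and> K (K x) = - x \<and> I (J (K x)) = - x"
    and "\<And>x. x \<in> m \<Longrightarrow> phi so3_e1 x = (1/2) *\<^sub>R I x" "\<And>x. x \<in> m \<Longrightarrow> phi so3_e2 x = (1/2) *\<^sub>R J x"
      "\<And>x. x \<in> m \<Longrightarrow> phi so3_e3 x = (1/2) *\<^sub>R K x"
    using phi(3) so3_units_in_so3 unfolding extends_to_Cl03_rep_def by (auto simp: axial_so3_units)
  then show ?thesis
    using that unit[OF so3_units_in_so3(1) IJK(1)] unit[OF so3_units_in_so3(2) IJK(2)]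
      unit[OF so3_units_in_so3(3) IJK(3)]
    by blast
qed

end

section \<open>Quaternionic structures commuting with a maximal torus\<close>

locale maximal_torus = invariant_scalar_product +
  fixes t :: "(real^'n^'n) set"
  assumes subspace_t: "subspace t" and t_subset: "t \<subseteq> g"
    and abelian: "\<And>X Y. X \<in> t \<Longrightarrow> Y \<in> t \<Longrightarrow> lie_bracket X Y = 0"
    and self_centralizing: "\<And>X. X \<in> g \<Longrightarrow> (\<And>Y. Y \<in> t \<Longrightarrow> lie_bracket Y X = 0) \<Longrightarrow> X \<in> t"
begin

lemma centralizing_orthogonal_eq_0:
  assumes "X \<in> g" "\<And>Y. Y \<in> t \<Longrightarrow> lie_bracket Y X = 0" "\<And>Y. Y \<in> t \<Longrightarrow> B X Y = 0"
  shows "X = 0"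
  using self_centralizing[OF assms(1,2)] assms(3) B_pos[OF assms(1)] by force

lemma B_bracket_torus: "u \<in> g \<Longrightarrow> v \<in> g \<Longrightarrow> Y \<in> t \<Longrightarrow> B (lie_bracket u v) Y = B v (lie_bracket Y u)"
  using B_bracket_swap t_subset by auto

lemma torus_brackets_commute:
  "Y \<in> t \<Longrightarrow> Y' \<in> t \<Longrightarrow> lie_bracket Y (lie_bracket Y' u) = lie_bracket Y' (lie_bracket Y u)"
  using lie_bracket_jacobi[of Y Y' u] abelian by simp

end

locale torus_quaternionic = maximal_torus +
  fixes m :: "(real^'n^'n) set" and I J K :: "real^'n^'n \<Rightarrow> real^'n^'n"
  assumes subspace_m: "subspace m" and m_subset: "m \<subseteq> g" and m_nonzero: "m \<noteq> {0}"
    and m_orthogonal: "\<And>X Y. X \<in> m \<Longrightarrow> Y \<in> t \<Longrightarrow> B X Y = 0"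
    and m_bracket_closed: "\<And>Y X. Y \<in> t \<Longrightarrow> X \<in> m \<Longrightarrow> lie_bracket Y X \<in> m"
    and quaternion: "\<forall>x\<in>m. I (I x) = - x \<and> J (J x) = - x \<and> K (K x) = - x \<and> I (J (K x)) = - x"
    and skew_I: "skew_endo_on m B I" and skew_J: "skew_endo_on m B J" and skew_K: "skew_endo_on m B K"
    and commute_I: "\<And>Y x. Y \<in> t \<Longrightarrow> x \<in> m \<Longrightarrow> lie_bracket Y (I x) = I (lie_bracket Y x)"
    and commute_J: "\<And>Y x. Y \<in> t \<Longrightarrow> x \<in> m \<Longrightarrow> lie_bracket Y (J x) = J (lie_bracket Y x)"
    and commute_K: "\<And>Y x. Y \<in> t \<Longrightarrow> x \<in> m \<Longrightarrow> lie_bracket Y (K x) = K (lie_bracket Y x)"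
begin

lemma endo_I: "endo_on m I" and endo_J: "endo_on m J" and endo_K: "endo_on m K"
  using skew_I skew_J skew_K by (simp_all add: skew_endo_on_def)

lemma frame_in_g: "x \<in> m \<Longrightarrow> x \<in> g" "x \<in> m \<Longrightarrow> I x \<in> g" "x \<in> m \<Longrightarrow> J x \<in> g" "x \<in> m \<Longrightarrow> K x \<in> g"
  using m_subset endo_on_mem[OF endo_I] endo_on_mem[OF endo_J] endo_on_mem[OF endo_K] by auto

lemma B_skew_self: "skew_endo_on m B P \<Longrightarrow> x \<in> m \<Longrightarrow> B (P x) x = 0"
  using B_sym[of "P x" x] m_subset by (force simp: skew_endo_on_def endo_on_def)

definition stable_subspace :: "(real^'n^'n) set \<Rightarrow> bool" where
  "stable_subspace V \<longleftrightarrow> subspace V \<and> V \<subseteq> m \<and> V \<noteq> {0} \<and>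
     (\<forall>x\<in>V. I x \<in> V) \<and> (\<forall>Y\<in>t. \<forall>x\<in>V. lie_bracket Y x \<in> V)"

lemma minimal_stable_subspace:
  obtains V where "stable_subspace V" "\<And>W. stable_subspace W \<Longrightarrow> W \<subseteq> V \<Longrightarrow> W = V"
proof -
  have "stable_subspace m"
    using subspace_m m_nonzero endo_I m_bracket_closed by (auto simp: stable_subspace_def endo_on_def)
  then obtain V where V: "stable_subspace V" and least: "\<And>W. stable_subspace W \<Longrightarrow> dim V \<le> dim W"
    using ex_has_least_nat[of stable_subspace m dim] by blast
  have "W = V" if "stable_subspace W" "W \<subseteq> V" for W
    using subspace_dim_equal[of W V] that V least[OF that(1)] by (auto simp: stable_subspace_def)
  then show ?thesis using that V by blast
qed

lemma ad_square_scalar_on_minimal: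
  assumes V: "stable_subspace V" and minimal: "\<And>W. stable_subspace W \<Longrightarrow> W \<subseteq> V \<Longrightarrow> W = V"
    and Y: "Y \<in> t"
  obtains l where "l \<le> 0" "\<And>x. x \<in> V \<Longrightarrow> lie_bracket Y (lie_bracket Y x) = l *\<^sub>R x"
proof -
  have V_sub: "subspace V" and V_m: "V \<subseteq> m" and V_I: "\<And>x. x \<in> V \<Longrightarrow> I x \<in> V"
    and V_t: "\<And>Y x. Y \<in> t \<Longrightarrow> x \<in> V \<Longrightarrow> lie_bracket Y x \<in> V"
    using V by (auto simp: stable_subspace_def)
  have Y_skew: "transpose Y = - Y" using Y t_subset skew by auto
  have ad_sq_linear: "linear (\<lambda>u. lie_bracket Y (lie_bracket Y u))"
    by (auto intro!: linearI simp: lie_bracket_add_right lie_bracket_scale_right)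
  have ad_sq_symmetric:
    "lie_bracket Y (lie_bracket Y u) \<bullet> w = u \<bullet> lie_bracket Y (lie_bracket Y w)" for u w
    using inner_lie_bracket_skew[OF Y_skew] by simp
  obtain v l where v: "v \<in> V" "v \<noteq> 0" and vl: "lie_bracket Y (lie_bracket Y v) = l *\<^sub>R v"
    using symmetric_operator_has_eigenvector[OF ad_sq_linear ad_sq_symmetric V_sub] V V_t[OF Y]
    by (auto simp: stable_subspace_def)
  define E where "E = {x \<in> V. lie_bracket Y (lie_bracket Y x) = l *\<^sub>R x}"
  have "stable_subspace E"
    unfolding stable_subspace_def E_def using v vl V_sub V_m V_I V_t Y subspace_m
    by (auto simp: subspace_def lie_bracket_add_right lie_bracket_scale_right scaleR_add_right
        commute_I m_bracket_closed endo_on_scale[OF endo_I] torus_brackets_commute subset_iff)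
  then have "lie_bracket Y (lie_bracket Y x) = l *\<^sub>R x" if "x \<in> V" for x
    using minimal[of E] that by (auto simp: E_def)
  moreover have "l \<le> 0"
  proof -
    have "l * (v \<bullet> v) = - (lie_bracket Y v \<bullet> lie_bracket Y v)"
      using inner_lie_bracket_skew[OF Y_skew, of "lie_bracket Y v" v] vl by simp
    then have "l * (v \<bullet> v) \<le> 0" by simp
    moreover have "v \<bullet> v > 0" using v by simp
    ultimately show ?thesis by (simp add: mult_le_0_iff)
  qed
  ultimately show ?thesis using that by blast
qed

text \<open>As \<open>ad Y\<^sup>2 = -\<mu>\<^sup>2\<close> on \<open>V\<close>, the vector \<open>u = [Y, v] + \<mu> I v\<close> satisfies \<open>[Y, u] = \<mu> I u\<close>.
  So \<open>ad Y - c I\<close> has a nonzero kernel in \<open>V\<close> for \<open>c = \<mu>\<close> or \<open>c = -\<mu>\<close>, and by minimality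
  this kernel is all of \<open>V\<close>.\<close>
lemma torus_acts_by_multiple_of_I:
  assumes V: "stable_subspace V" and minimal: "\<And>W. stable_subspace W \<Longrightarrow> W \<subseteq> V \<Longrightarrow> W = V"
    and Y: "Y \<in> t"
  shows "\<exists>c. \<forall>x\<in>V. lie_bracket Y x = c *\<^sub>R I x"
proof -
  have V_sub: "subspace V" and V_m: "V \<subseteq> m" and V_I: "\<And>x. x \<in> V \<Longrightarrow> I x \<in> V"
    and V_t: "\<And>Y x. Y \<in> t \<Longrightarrow> x \<in> V \<Longrightarrow> lie_bracket Y x \<in> V" and "V \<noteq> {0}"
    using V by (auto simp: stable_subspace_def)
  obtain l where "l \<le> 0" and sq: "\<And>x. x \<in> V \<Longrightarrow> lie_bracket Y (lie_bracket Y x) = l *\<^sub>R x"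
    using ad_square_scalar_on_minimal[OF V minimal Y] by blast
  obtain v where v: "v \<in> V" "v \<noteq> 0" using \<open>V \<noteq> {0}\<close> V_sub subspace_0 by blast
  define \<mu> where "\<mu> = sqrt (- l)"
  have "\<exists>w c. w \<in> V \<and> w \<noteq> 0 \<and> lie_bracket Y w = c *\<^sub>R I w"
  proof (cases "lie_bracket Y v + \<mu> *\<^sub>R I v = 0")
    case True
    then have "lie_bracket Y v = (- \<mu>) *\<^sub>R I v" by (simp add: eq_neg_iff_add_eq_0)
    then show ?thesis using v by blast
  next
    case False
    let ?u = "lie_bracket Y v + \<mu> *\<^sub>R I v"
    have vm: "v \<in> m" "lie_bracket Y v \<in> m" "I v \<in> m"
      using v V_m m_bracket_closed[OF Y] endo_on_mem[OF endo_I] by auto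
    have "lie_bracket Y ?u = l *\<^sub>R v + \<mu> *\<^sub>R I (lie_bracket Y v)"
      using sq[OF v(1)] commute_I[OF Y vm(1)]
      by (simp add: lie_bracket_add_right lie_bracket_scale_right)
    also have "\<dots> = \<mu> *\<^sub>R I ?u"
    proof -
      have "\<mu> * \<mu> = - l" using \<open>l \<le> 0\<close> by (simp add: \<mu>_def)
      moreover have "I ?u = I (lie_bracket Y v) - \<mu> *\<^sub>R v"
        using vm quaternion subspace_m
        by (simp add: endo_on_add[OF endo_I] endo_on_scale[OF endo_I] subspace_scale)
      ultimately show ?thesis by (simp add: scaleR_diff_right)
    qed
    finally have "lie_bracket Y ?u = \<mu> *\<^sub>R I ?u" .
    moreover have "?u \<in> V" using v V_sub V_t[OF Y] V_I by (simp add: subspace_add subspace_scale)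
    ultimately show ?thesis using False by (intro exI[where x = ?u] exI[where x = \<mu>]) simp
  qed
  then obtain w c where w: "w \<in> V" "w \<noteq> 0" and wc: "lie_bracket Y w = c *\<^sub>R I w" by blast
  have I0: "I 0 = 0" using endo_on_scale[OF endo_I subspace_0[OF subspace_m], of 0] by simp
  define E where "E = {x \<in> V. lie_bracket Y x = c *\<^sub>R I x}"
  have "stable_subspace E"
    unfolding stable_subspace_def E_def using w wc V_sub V_m V_I V_t Y subspace_m I0
    by (auto simp: subspace_def lie_bracket_add_right lie_bracket_scale_right scaleR_add_right
        commute_I endo_on_add[OF endo_I] endo_on_scale[OF endo_I] torus_brackets_commute subset_iff)
  then show ?thesis using minimal[of E] by (auto simp: E_def)
qed

lemma joint_weight_vector:
  obtains x \<alpha> where "x \<in> m" "x \<noteq> 0" "\<And>Y. Y \<in> t \<Longrightarrow> lie_bracket Y x = \<alpha> Y *\<^sub>R I x"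
proof -
  obtain V where V: "stable_subspace V" and minimal: "\<And>W. stable_subspace W \<Longrightarrow> W \<subseteq> V \<Longrightarrow> W = V"
    using minimal_stable_subspace by blast
  then have "subspace V" "V \<subseteq> m" "V \<noteq> {0}" by (simp_all add: stable_subspace_def)
  then obtain x where x: "x \<in> V" "x \<noteq> 0" using subspace_0 by blast
  have "\<forall>Y\<in>t. \<exists>c. \<forall>x\<in>V. lie_bracket Y x = c *\<^sub>R I x"
    using torus_acts_by_multiple_of_I[OF V minimal] by blast
  from bchoice[OF this] obtain \<alpha> where "\<forall>Y\<in>t. \<forall>x\<in>V. lie_bracket Y x = \<alpha> Y *\<^sub>R I x" ..
  then show ?thesis using that[of x \<alpha>] x \<open>V \<subseteq> m\<close> by blast
qed

lemma weight_vector_brackets: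
  assumes x: "x \<in> m" and weight: "\<And>Y. Y \<in> t \<Longrightarrow> lie_bracket Y x = \<alpha> Y *\<^sub>R I x" and Y: "Y \<in> t"
  shows "lie_bracket Y (I x) = - (\<alpha> Y *\<^sub>R x)"
    and "lie_bracket Y (J x) = - (\<alpha> Y *\<^sub>R K x)"
    and "lie_bracket Y (K x) = \<alpha> Y *\<^sub>R J x"
proof -
  have Ix: "I x \<in> m" using endo_on_mem[OF endo_I x] .
  note products = quaternion_products[OF endo_I endo_J endo_K quaternion x]
  show "lie_bracket Y (I x) = - (\<alpha> Y *\<^sub>R x)"
    using commute_I[OF Y x] weight[OF Y] endo_on_scale[OF endo_I Ix] quaternion x by simp
  show "lie_bracket Y (J x) = - (\<alpha> Y *\<^sub>R K x)"
    using commute_J[OF Y x] weight[OF Y] endo_on_scale[OF endo_J Ix] products by simp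
  show "lie_bracket Y (K x) = \<alpha> Y *\<^sub>R J x"
    using commute_K[OF Y x] weight[OF Y] endo_on_scale[OF endo_K Ix] products by simp
qed

lemma quaternion_frame_B:
  assumes x: "x \<in> m"
  shows "B (I x) (I x) = B x x" and "B (J x) (J x) = B x x"
    and "B (J x) x = 0" and "B (K x) x = 0" and "B (J x) (I x) = 0" and "B (K x) (I x) = 0"
proof -
  have mem: "x \<in> g" "I x \<in> m" "J x \<in> m" "K x \<in> m"
    using x m_subset endo_on_mem[OF endo_I] endo_on_mem[OF endo_J] endo_on_mem[OF endo_K] by auto
  note products = quaternion_products[OF endo_I endo_J endo_K quaternion x]
  have skew: "B (P y) z = - B y (P z)" if "skew_endo_on m B P" "y \<in> m" "z \<in> m" for P y z
    using that by (simp add: skew_endo_on_def)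
  show "B (I x) (I x) = B x x"
    using skew[OF skew_I x mem(2)] quaternion x B_minus_right[OF mem(1) mem(1)] by simp
  show "B (J x) (J x) = B x x"
    using skew[OF skew_J x mem(3)] quaternion x B_minus_right[OF mem(1) mem(1)] by simp
  show Jx: "B (J x) x = 0" by (rule B_skew_self[OF skew_J x])
  show Kx: "B (K x) x = 0" by (rule B_skew_self[OF skew_K x])
  have "B (J x) (I x) = B x (K x)"
    using skew[OF skew_J x mem(2)] products B_minus_right[OF _ mem(1), of "K x"] mem m_subset by auto
  then show "B (J x) (I x) = 0" using Kx B_sym[of x "K x"] mem m_subset by auto
  have "B (K x) (I x) = - B x (J x)" using skew[OF skew_K x mem(2)] products by simp
  then show "B (K x) (I x) = 0" using Jx B_sym[of x "J x"] mem m_subset by auto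
qed

lemma weight_torus_element:
  assumes x: "x \<in> m" and weight: "\<And>Y. Y \<in> t \<Longrightarrow> lie_bracket Y x = \<alpha> Y *\<^sub>R I x"
  shows "lie_bracket x (I x) \<in> t"
    and "\<And>Y. Y \<in> t \<Longrightarrow> B (lie_bracket x (I x)) Y = \<alpha> Y * B x x"
proof -
  have mem: "x \<in> g" "I x \<in> g" using x m_subset endo_on_mem[OF endo_I x] by auto
  show "lie_bracket x (I x) \<in> t"
  proof (rule self_centralizing)
    show "lie_bracket x (I x) \<in> g" using bracket_closed[OF mem] .
    fix Y assume Y: "Y \<in> t"
    then show "lie_bracket Y (lie_bracket x (I x)) = 0"
      using lie_bracket_jacobi[of Y x "I x"] weight weight_vector_brackets(1)[OF x weight Y]
      by (simp add: lie_bracket_scale_left lie_bracket_minus_right lie_bracket_scale_right)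
  qed
  fix Y assume Y: "Y \<in> t"
  have "B (lie_bracket x (I x)) Y = B (I x) (\<alpha> Y *\<^sub>R I x)"
    using B_bracket_swap[OF mem(2) _ mem(1)] Y t_subset weight[OF Y] by auto
  then show "B (lie_bracket x (I x)) Y = \<alpha> Y * B x x"
    using B_scale_right[OF mem(2) mem(2)] quaternion_frame_B(1)[OF x] by simp
qed

lemma weight_vector_bracket_J:
  assumes x: "x \<in> m" and weight: "\<And>Y. Y \<in> t \<Longrightarrow> lie_bracket Y x = \<alpha> Y *\<^sub>R I x"
  shows "lie_bracket x (J x) = lie_bracket (I x) (K x)"
proof -
  note mem = frame_in_g[OF x]
  have "lie_bracket x (J x) - lie_bracket (I x) (K x) = 0"
  proof (rule centralizing_orthogonal_eq_0)
    show "lie_bracket x (J x) - lie_bracket (I x) (K x) \<in> g"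
      using mem bracket_closed subspace_g by (simp add: subspace_diff)
  next
    fix Y assume Y: "Y \<in> t"
    note brackets = weight[OF Y] weight_vector_brackets[OF x weight Y]
    show "lie_bracket Y (lie_bracket x (J x) - lie_bracket (I x) (K x)) = 0"
      using lie_bracket_jacobi[of Y x "J x"] lie_bracket_jacobi[of Y "I x" "K x"] brackets
      by (simp add: lie_bracket_diff_right lie_bracket_scale_left lie_bracket_scale_right
          lie_bracket_minus_left lie_bracket_minus_right)
    have "B (lie_bracket x (J x)) Y = 0" "B (lie_bracket (I x) (K x)) Y = 0"
      using B_bracket_torus[OF mem(1,3) Y] B_bracket_torus[OF mem(2,4) Y] brackets
        quaternion_frame_B[OF x] mem
      by (simp_all add: B_scale_right B_minus_right scaleR_in_g)
    then show "B (lie_bracket x (J x) - lie_bracket (I x) (K x)) Y = 0"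
      using B_diff_left mem bracket_closed Y t_subset by auto
  qed
  then show ?thesis by simp
qed

lemma weight_vector_bracket_K:
  assumes x: "x \<in> m" and weight: "\<And>Y. Y \<in> t \<Longrightarrow> lie_bracket Y x = \<alpha> Y *\<^sub>R I x"
  shows "lie_bracket x (K x) = - lie_bracket (I x) (J x)"
proof -
  note mem = frame_in_g[OF x]
  have "lie_bracket x (K x) + lie_bracket (I x) (J x) = 0"
  proof (rule centralizing_orthogonal_eq_0)
    show "lie_bracket x (K x) + lie_bracket (I x) (J x) \<in> g"
      using mem bracket_closed subspace_g by (simp add: subspace_add)
  next
    fix Y assume Y: "Y \<in> t"
    note brackets = weight[OF Y] weight_vector_brackets[OF x weight Y]
    show "lie_bracket Y (lie_bracket x (K x) + lie_bracket (I x) (J x)) = 0"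
      using lie_bracket_jacobi[of Y x "K x"] lie_bracket_jacobi[of Y "I x" "J x"] brackets
      by (simp add: lie_bracket_add_right lie_bracket_scale_left lie_bracket_scale_right
          lie_bracket_minus_left lie_bracket_minus_right)
    have "B (lie_bracket x (K x)) Y = 0" "B (lie_bracket (I x) (J x)) Y = 0"
      using B_bracket_torus[OF mem(1,4) Y] B_bracket_torus[OF mem(2,3) Y] brackets
        quaternion_frame_B[OF x] mem
      by (simp_all add: B_scale_right B_minus_right scaleR_in_g)
    then show "B (lie_bracket x (K x) + lie_bracket (I x) (J x)) Y = 0"
      using B_add_left mem bracket_closed Y t_subset by auto
  qed
  then show ?thesis by (simp add: eq_neg_iff_add_eq_0)
qed

lemma weight_positive_on_torus_element:
  assumes x: "x \<in> m" "x \<noteq> 0" and weight: "\<And>Y. Y \<in> t \<Longrightarrow> lie_bracket Y x = \<alpha> Y *\<^sub>R I x"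
  shows "\<alpha> (lie_bracket x (I x)) > 0"
proof -
  define h0 where "h0 = lie_bracket x (I x)"
  have "B x x > 0" using B_pos[OF frame_in_g(1)[OF x(1)] x(2)] .
  have h0: "h0 \<in> t" "\<And>Y. Y \<in> t \<Longrightarrow> B h0 Y = \<alpha> Y * B x x"
    using weight_torus_element[OF x(1) weight] by (simp_all add: h0_def)
  have "h0 \<noteq> 0"
  proof
    assume "h0 = 0"
    then have "\<alpha> Y = 0" if "Y \<in> t" for Y
      using h0(2)[OF that] B_zero_left[of Y] that t_subset \<open>B x x > 0\<close> by auto
    then have "x \<in> t" using self_centralizing[OF frame_in_g(1)[OF x(1)]] weight by simp
    then show False using m_orthogonal[OF x(1)] \<open>B x x > 0\<close> by simp
  qed
  then have "\<alpha> h0 * B x x > 0" using B_pos[of h0] h0 t_subset by force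
  then show ?thesis using \<open>B x x > 0\<close> by (simp add: h0_def zero_less_mult_iff)
qed

lemma inconsistent: False
proof -
  obtain x \<alpha> where x: "x \<in> m" "x \<noteq> 0" and weight: "\<And>Y. Y \<in> t \<Longrightarrow> lie_bracket Y x = \<alpha> Y *\<^sub>R I x"
    using joint_weight_vector by blast
  note mem = frame_in_g[OF x(1)]
  define P where "P = lie_bracket x (J x)"
  define Q where "Q = lie_bracket (I x) (J x)"
  have PQ: "lie_bracket (I x) (K x) = P" "lie_bracket x (K x) = - Q"
    using weight_vector_bracket_J[OF x(1) weight] weight_vector_bracket_K[OF x(1) weight]
    by (simp_all add: P_def Q_def)
  have in_g: "P \<in> g" "Q \<in> g" "lie_bracket (I x) (lie_bracket x (K x)) \<in> g"
    using mem bracket_closed by (auto simp: P_def Q_def)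
  have "B P P = - B (J x) (lie_bracket x (lie_bracket (I x) (K x)))"
    using B_bracket[OF mem(3) in_g(1) mem(1)] PQ by (simp add: P_def)
  moreover have "B Q Q = B (J x) (lie_bracket (I x) (lie_bracket x (K x)))"
    using B_bracket[OF mem(3) in_g(2) mem(2)] PQ
      B_minus_right[OF bracket_closed[OF mem(2) in_g(2)] mem(3)]
    by (simp add: Q_def lie_bracket_minus_right)
  moreover have "lie_bracket x (lie_bracket (I x) (K x))
      = \<alpha> (lie_bracket x (I x)) *\<^sub>R J x + lie_bracket (I x) (lie_bracket x (K x))"
    using lie_bracket_jacobi[of x "I x" "K x"]
      weight_vector_brackets(3)[OF x(1) weight weight_torus_element(1)[OF x(1) weight]]
    by simp
  ultimately have "B P P + B Q Q = - (\<alpha> (lie_bracket x (I x)) * B x x)"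
    using B_add_right[OF _ in_g(3) mem(3)] B_scale_right[OF mem(3) mem(3)] mem scaleR_in_g
      quaternion_frame_B(2)[OF x(1)]
    by simp
  moreover have "B P P \<ge> 0" "B Q Q \<ge> 0" using B_nonneg in_g by auto
  moreover have "\<alpha> (lie_bracket x (I x)) * B x x > 0"
    using weight_positive_on_torus_element[OF x weight] B_pos[OF mem(1) x(2)] by simp
  ultimately show False by linarith
qed

end

theorem lemma3p2:
  fixes g h :: "(real^'n^'n) set"
    and B :: "real^'n^'n \<Rightarrow> real^'n^'n \<Rightarrow> real"
    and rho :: "real^'n^'n \<Rightarrow> real^3^3"
    and phi :: "real^3^3 \<Rightarrow> real^'n^'n \<Rightarrow> real^'n^'n"
  assumes "compact_lie_algebra g"
    and "lie_subalgebra h" and "h \<subseteq> g"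
    and "ad_invariant_scalar_product g B"
    and "orth_compl g h B \<noteq> {0}"
    and "lie_rank h = lie_rank g"
    and "faithful_isotropy h (orth_compl g h B)"
    and "lie_hom_into_so3 h rho"
    and "lie_hom_so3_skew_endo (orth_compl g h B) B phi"
    and "equivariant_inf h (orth_compl g h B) rho phi"
    and "extends_to_Cl03_rep (orth_compl g h B) phi"
  shows "\<exists>Y\<in>h. rho Y \<noteq> 0"
proof (rule ccontr)
  assume "\<not> (\<exists>Y\<in>h. rho Y \<noteq> 0)"
  then have rho: "\<And>Y. Y \<in> h \<Longrightarrow> rho Y = 0" by blast
  interpret invariant_scalar_product g B using assms(1,4) by unfold_locales
  define m where "m = orth_compl g h B"
  obtain t where t: "subspace t" "t \<subseteq> h" "\<forall>X\<in>t. \<forall>Y\<in>t. lie_bracket X Y = 0"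
    and t_max: "\<And>X. X \<in> g \<Longrightarrow> (\<And>Y. Y \<in> t \<Longrightarrow> lie_bracket Y X = 0) \<Longrightarrow> X \<in> t"
    using exists_self_centralizing_torus[OF _ assms(2,3,6)] assms(1)
    by (auto simp: compact_lie_algebra_def)
  obtain I J K where "\<forall>x\<in>m. I (I x) = - x \<and> J (J x) = - x \<and> K (K x) = - x \<and> I (J (K x)) = - x"
    and "skew_endo_on m B I" "skew_endo_on m B J" "skew_endo_on m B K"
    and "\<forall>Y\<in>h. \<forall>x\<in>m. lie_bracket Y (I x) = I (lie_bracket Y x)"
    and "\<forall>Y\<in>h. \<forall>x\<in>m. lie_bracket Y (J x) = J (lie_bracket Y x)"
    and "\<forall>Y\<in>h. \<forall>x\<in>m. lie_bracket Y (K x) = K (lie_bracket Y x)"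
    using quaternionic_structure_of_phi[OF assms(2,3) m_def] assms(9-11) rho unfolding m_def by blast
  moreover have "t \<subseteq> g" "subspace m" "m \<subseteq> g" "m \<noteq> {0}" "\<And>X Y. X \<in> m \<Longrightarrow> Y \<in> t \<Longrightarrow> B X Y = 0"
    "\<And>Y X. Y \<in> t \<Longrightarrow> X \<in> m \<Longrightarrow> lie_bracket Y X \<in> m"
    using t(2) assms(3,5) subspace_orth_compl[OF assms(3)] orth_compl_bracket_closed[OF assms(2,3)]
    by (auto simp: m_def orth_compl_def)
  ultimately have "torus_quaternionic g B t m I J K"
    using assms(1,4) t t_max by unfold_locales (use t(2) in blast)+
  then show False by (rule torus_quaternionic.inconsistent)
qed

end
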